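(* Let $G$ be a connected simple planar graph with $f_0$ vertices, $f_1$ edges and $f_2$ faces, and let $p(x)=f_2x^3+f_1x^2+f_0x+2$ be its Euler polynomial. Then all roots of $p(x)$ are real if and only if $(f_0+2)^2\ge 8(f_1+2)$, which is in turn equivalent to $(f_0-2)^2\ge 8f_2$.
   Context: All graphs are finite and simple (no loops, no parallel edges). For a connected planar graph, fix a planar embedding; $f_0,f_1,f_2$ denote the numbers of vertices, edges and faces (the unbounded face included), so that Euler's formula $f_0-f_1+f_2=2$ holds. *)

theory Defs
  imports Complex_Main "HOL-Computational_Algebra.Polynomial"
begin

definition simple_graph :: "'a set \<Rightarrow> 'a set set \<Rightarrow> bool" where
  "simple_graph V E \<longleftrightarrow> finite V \<and>
     (\<forall>e\<in>E. \<exists>u v. e = {u, v} \<and> u \<noteq> v \<and> u \<in> V \<and> v \<in> V)"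

definition adj_rel :: "'a set set \<Rightarrow> ('a \<times> 'a) set" where
  "adj_rel E = {(u, v). {u, v} \<in> E}"

definition connected_graph :: "'a set \<Rightarrow> 'a set set \<Rightarrow> bool" where
  "connected_graph V E \<longleftrightarrow> V \<noteq> {} \<and> (\<forall>u\<in>V. \<forall>v\<in>V. (u, v) \<in> (adj_rel E)\<^sup>*)"

definition neighbors :: "'a set set \<Rightarrow> 'a \<Rightarrow> 'a set" where
  "neighbors E v = {u. {v, u} \<in> E}"

definition darts :: "'a set set \<Rightarrow> ('a \<times> 'a) set" where
  "darts E = {(u, v). {u, v} \<in> E}"

text \<open>Combinatorial embedding (rotation system): for every vertex v, sigma v is
  a cyclic permutation of the neighbours of v (a single cycle).\<close>
definition rotation_system :: "'a set \<Rightarrow> 'a set set \<Rightarrow> ('a \<Rightarrow> 'a \<Rightarrow> 'a) \<Rightarrow> bool" where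
  "rotation_system V E \<sigma> \<longleftrightarrow>
     (\<forall>v\<in>V. bij_betw (\<sigma> v) (neighbors E v) (neighbors E v) \<and>
        (\<forall>u\<in>neighbors E v. neighbors E v = {(\<sigma> v ^^ k) u | k. True}))"

definition face_perm :: "('a \<Rightarrow> 'a \<Rightarrow> 'a) \<Rightarrow> 'a \<times> 'a \<Rightarrow> 'a \<times> 'a" where
  "face_perm \<sigma> d = (snd d, \<sigma> (snd d) (fst d))"

definition faces :: "'a set set \<Rightarrow> ('a \<Rightarrow> 'a \<Rightarrow> 'a) \<Rightarrow> ('a \<times> 'a) set set" where
  "faces E \<sigma> = {{(face_perm \<sigma> ^^ k) d | k. True} | d. d \<in> darts E}"

text \<open>Number of faces f2; a graph without edges (a single vertex, if connected)
  has exactly one face.\<close>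
definition num_faces :: "'a set set \<Rightarrow> ('a \<Rightarrow> 'a \<Rightarrow> 'a) \<Rightarrow> nat" where
  "num_faces E \<sigma> = (if E = {} then 1 else card (faces E \<sigma>))"

text \<open>A planar (spherical, genus 0) combinatorial embedding: a rotation system
  whose Euler characteristic V - E + F equals 2.\<close>
definition planar_embedding :: "'a set \<Rightarrow> 'a set set \<Rightarrow> ('a \<Rightarrow> 'a \<Rightarrow> 'a) \<Rightarrow> bool" where
  "planar_embedding V E \<sigma> \<longleftrightarrow> rotation_system V E \<sigma> \<and>
     int (card V) - int (card E) + int (num_faces E \<sigma>) = 2"

definition euler_poly :: "nat \<Rightarrow> nat \<Rightarrow> nat \<Rightarrow> complex poly" where
  "euler_poly f0 f1 f2 = [:2, of_nat f0, of_nat f1, of_nat f2:]"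

end

theory Submission
  imports Defs
begin

text \<open>Euler's relation \<open>f\<^sub>1 = f\<^sub>0 + f\<^sub>2 - 2\<close> makes \<open>-1\<close> a root of the Euler polynomial:
  \<open>p(x) = (x + 1) (f\<^sub>2 x\<^sup>2 + (f\<^sub>0 - 2) x + 2)\<close>. So all roots of \<open>p\<close> are real iff those of
  the quadratic factor are, i.e. iff its discriminant \<open>(f\<^sub>0 - 2)\<^sup>2 - 8 f\<^sub>2\<close> is
  nonnegative; Euler's relation again turns this discriminant into
  \<open>(f\<^sub>0 + 2)\<^sup>2 - 8 (f\<^sub>1 + 2)\<close>.\<close>

lemma roots_real_poly_mult_iff:
  fixes p q :: "complex poly"
  shows "(\<forall>z. poly (p * q) z = 0 \<longrightarrow> z \<in> \<real>) \<longleftrightarrow>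
         (\<forall>z. poly p z = 0 \<longrightarrow> z \<in> \<real>) \<and> (\<forall>z. poly q z = 0 \<longrightarrow> z \<in> \<real>)"
  by auto

lemma complex_square_eq_of_real_nonneg_imp_Reals:
  fixes w :: complex
  assumes "w\<^sup>2 = of_real d" and "d \<ge> 0"
  shows "w \<in> \<real>"
proof -
  have "w\<^sup>2 = (of_real (sqrt d))\<^sup>2"
    using assms by (simp flip: of_real_power)
  then have "w = of_real (sqrt d) \<or> w = - of_real (sqrt d)"
    by (simp add: power2_eq_iff)
  then show ?thesis
    by auto
qed

lemma roots_real_quadratic_iff:
  fixes a b c :: real
  assumes "a \<noteq> 0"
  shows "(\<forall>z::complex. of_real a * z\<^sup>2 + of_real b * z + of_real c = 0 \<longrightarrow> z \<in> \<real>)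
         \<longleftrightarrow> 4 * a * c \<le> b\<^sup>2"
proof -
  define d where "d = b\<^sup>2 - 4 * a * c"
  \<comment> \<open>completing the square, with \<open>w = 2 a z + b\<close>\<close>
  have root_iff: "of_real a * z\<^sup>2 + of_real b * z + of_real c = 0 \<longleftrightarrow>
                  (2 * of_real a * z + of_real b)\<^sup>2 = of_real d" for z :: complex
  proof -
    have "4 * of_real a * (of_real a * z\<^sup>2 + of_real b * z + of_real c) =
          (2 * of_real a * z + of_real b)\<^sup>2 - of_real d"
      unfolding d_def by (simp add: power2_eq_square algebra_simps)
    then show ?thesis
      using assms by (metis eq_iff_diff_eq_0 mult_eq_0_iff of_real_eq_0_iff zero_neq_numeral)
  qed
  have real_iff: "z \<in> \<real> \<longleftrightarrow> 2 * of_real a * z + of_real b \<in> \<real>" for z :: complex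
  proof
    assume "2 * of_real a * z + of_real b \<in> \<real>"
    then have "(2 * of_real a * z + of_real b - of_real b) / (2 * of_real a) \<in> \<real>"
      by (intro Reals_divide Reals_diff) auto
    then show "z \<in> \<real>"
      using assms by simp
  qed auto
  show ?thesis
  proof
    assume all_real: "\<forall>z::complex. of_real a * z\<^sup>2 + of_real b * z + of_real c = 0 \<longrightarrow> z \<in> \<real>"
    show "4 * a * c \<le> b\<^sup>2"
    proof (rule ccontr)
      assume "\<not> 4 * a * c \<le> b\<^sup>2"
      then have "d < 0"
        by (simp add: d_def)
      define z where "z = (\<i> * of_real (sqrt (- d)) - of_real b) / (2 * of_real a)"
      have w: "2 * of_real a * z + of_real b = \<i> * of_real (sqrt (- d))"
        using assms by (simp add: z_def)
      then have "(2 * of_real a * z + of_real b)\<^sup>2 = of_real d"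
        using \<open>d < 0\<close> by (simp add: power_mult_distrib flip: of_real_power)
      then have "z \<in> \<real>"
        using all_real root_iff by blast
      then show False
        using real_iff w \<open>d < 0\<close> by (simp add: complex_is_Real_iff)
    qed
  next
    assume "4 * a * c \<le> b\<^sup>2"
    then have "d \<ge> 0"
      by (simp add: d_def)
    then show "\<forall>z::complex. of_real a * z\<^sup>2 + of_real b * z + of_real c = 0 \<longrightarrow> z \<in> \<real>"
      using root_iff real_iff complex_square_eq_of_real_nonneg_imp_Reals by blast
  qed
qed

lemma roots_real_pCons_quadratic_iff:
  fixes a b c :: real
  assumes "[:c, b, a:] \<noteq> 0"
  shows "(\<forall>z::complex. poly [:of_real c, of_real b, of_real a:] z = 0 \<longrightarrow> z \<in> \<real>)
         \<longleftrightarrow> 4 * a * c \<le> b\<^sup>2"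
proof (cases "a = 0")
  case False
  then show ?thesis
    using roots_real_quadratic_iff[of a b c]
    by (simp add: power2_eq_square algebra_simps)
next
  case True
  have "poly [:of_real c, of_real b, of_real a:] z = 0 \<longrightarrow> z \<in> \<real>" for z :: complex
  proof
    assume "poly [:of_real c, of_real b, of_real a:] z = 0"
    then have "of_real b * z = - of_real c"
      using True by (simp add: algebra_simps add_eq_0_iff)
    moreover have "b \<noteq> 0"
      using True assms calculation by auto
    ultimately have "z = of_real (- c / b)"
      by (simp add: field_simps)
    then show "z \<in> \<real>"
      by simp
  qed
  then show ?thesis
    using True by simp
qed

lemma euler_poly_factor:
  assumes "int f0 - int f1 + int f2 = 2"
  shows "euler_poly f0 f1 f2 = [:1, 1:] * [:2, of_nat f0 - 2, of_nat f2:]"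
proof -
  have "f1 + 2 = f0 + f2"
    using assms by linarith
  then have "(of_nat (f1 + 2) :: complex) = of_nat (f0 + f2)"
    by (simp only:)
  then show ?thesis
    by (simp add: euler_poly_def algebra_simps)
qed

lemma euler_poly_roots_real_iff:
  assumes "int f0 - int f1 + int f2 = 2"
  shows "(\<forall>z. poly (euler_poly f0 f1 f2) z = 0 \<longrightarrow> z \<in> \<real>) \<longleftrightarrow> 8 * int f2 \<le> (int f0 - 2)\<^sup>2"
proof -
  have quadratic_factor:
    "[:2, of_nat f0 - 2, of_nat f2:] = ([:of_real 2, of_real (real f0 - 2), of_real (real f2):] :: complex poly)"
    by simp
  have "(\<forall>z. poly (euler_poly f0 f1 f2) z = 0 \<longrightarrow> z \<in> \<real>) \<longleftrightarrow>
        (\<forall>z::complex. poly [:2, of_nat f0 - 2, of_nat f2:] z = 0 \<longrightarrow> z \<in> \<real>)"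
    unfolding euler_poly_factor[OF assms] roots_real_poly_mult_iff
    by (auto simp: add_eq_0_iff)
  also have "\<dots> \<longleftrightarrow> 4 * real f2 * 2 \<le> (real f0 - 2)\<^sup>2"
    unfolding quadratic_factor by (rule roots_real_pCons_quadratic_iff) simp
  also have "\<dots> \<longleftrightarrow> 8 * int f2 \<le> (int f0 - 2)\<^sup>2"
  proof -
    have "4 * real f2 * 2 = of_int (8 * int f2)" and "(real f0 - 2)\<^sup>2 = of_int ((int f0 - 2)\<^sup>2)"
      by simp_all
    then show ?thesis
      by (simp only: of_int_le_iff)
  qed
  finally show ?thesis .
qed

theorem mainTheorem1:
  fixes V :: "'a set" and E :: "'a set set" and \<sigma> :: "'a \<Rightarrow> 'a \<Rightarrow> 'a"
  assumes "simple_graph V E" and "connected_graph V E" and "planar_embedding V E \<sigma>"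
  shows "((\<forall>z. poly (euler_poly (card V) (card E) (num_faces E \<sigma>)) z = 0 \<longrightarrow> z \<in> \<real>)
            \<longleftrightarrow> (int (card V) + 2)^2 \<ge> 8 * (int (card E) + 2))
       \<and> ((int (card V) + 2)^2 \<ge> 8 * (int (card E) + 2)
            \<longleftrightarrow> (int (card V) - 2)^2 \<ge> 8 * int (num_faces E \<sigma>))"
proof -
  define f0 f1 f2 where "f0 = card V" and "f1 = card E" and "f2 = num_faces E \<sigma>"
  have euler: "int f0 - int f1 + int f2 = 2"
    using assms(3) by (simp add: planar_embedding_def f0_def f1_def f2_def)
  then have "(int f0 + 2)\<^sup>2 - 8 * (int f1 + 2) = (int f0 - 2)\<^sup>2 - 8 * int f2"
    by (simp add: power2_eq_square algebra_simps)
  then have "8 * (int f1 + 2) \<le> (int f0 + 2)\<^sup>2 \<longleftrightarrow> 8 * int f2 \<le> (int f0 - 2)\<^sup>2"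
    by linarith
  with euler_poly_roots_real_iff[OF euler] show ?thesis
    unfolding f0_def f1_def f2_def by blast
qed

end
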